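(* Let $f:[a,b]\to\mathbb F$ and assume that $f^*:[a,b]\to\mathbb F$, $f^*(s)=f(s^* )$, is $g$-continuous on $[a,b]$. Then $f$ is $g$-continuous on $[a,b]$ if and only if $f(t)=f(s)$ for all $t,s\in[a,b]$ with $g(t)=g(s)$.
   Context: Let $g:\mathbb R\to\mathbb R$ be nondecreasing and left-continuous, $\mathbb F\in\{\mathbb R,\mathbb C\}$. $\Delta g(t)=g(t^+)-g(t)$, $D_g=\{t:\Delta g(t)>0\}$, $C_g=\{t: g\text{ constant on }(t-\varepsilon,t+\varepsilon)\text{ for some }\varepsilon>0\}=\bigcup_{n\in\Lambda}(a_n,b_n)$ (disjoint union of connected components), $N_g^-=\{a_n\}\setminus D_g$, $N_g^+=\{b_n\}\setminus D_g$. Fix $a<b$ with $a\notin N_g^-\cup D_g$, $b\notin D_g\cup C_g\cup N_g^+$. For $s\in[a,b]$, $s^*=s$ if $s\notin C_g$ and $s^*=b_n$ if $s\in(a_n,b_n)$. A function $u:D\subset\mathbb R\to\mathbb F$ is $g$-continuous at $t\in D$ if for every $\varepsilon>0$ there is $\delta>0$ with $|u(t)-u(s)|<\varepsilon$ for all $s\in D$ with $|g(t)-g(s)|<\delta$; it is $g$-continuous on $D$ if this holds at every $t\in D$. *)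

theory Defs
  imports "HOL-Analysis.Analysis"
begin

definition jump :: "(real \<Rightarrow> real) \<Rightarrow> real \<Rightarrow> real" where
  "jump g t = Lim (at_right t) g - g t"

definition Dg :: "(real \<Rightarrow> real) \<Rightarrow> real set" where
  "Dg g = {t. jump g t > 0}"

definition Cg :: "(real \<Rightarrow> real) \<Rightarrow> real set" where
  "Cg g = {t. \<exists>\<epsilon>>0. \<forall>s\<in>{t-\<epsilon><..<t+\<epsilon>}. g s = g t}"

text \<open>Left endpoints a_n (resp. right endpoints b_n) of the connected components
  (a_n,b_n) of the open set C_g.\<close>
definition left_ends :: "(real \<Rightarrow> real) \<Rightarrow> real set" where
  "left_ends g = {a. a \<notin> Cg g \<and> (\<exists>b>a. {a<..<b} \<subseteq> Cg g)}"

definition right_ends :: "(real \<Rightarrow> real) \<Rightarrow> real set" where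
  "right_ends g = {b. b \<notin> Cg g \<and> (\<exists>a<b. {a<..<b} \<subseteq> Cg g)}"

definition Ng_minus :: "(real \<Rightarrow> real) \<Rightarrow> real set" where
  "Ng_minus g = left_ends g - Dg g"

definition Ng_plus :: "(real \<Rightarrow> real) \<Rightarrow> real set" where
  "Ng_plus g = right_ends g - Dg g"

definition star :: "(real \<Rightarrow> real) \<Rightarrow> real \<Rightarrow> real" where
  "star g s = (if s \<notin> Cg g then s
               else (THE b. s < b \<and> b \<notin> Cg g \<and> {s..<b} \<subseteq> Cg g))"

definition g_continuous_at ::
    "(real \<Rightarrow> real) \<Rightarrow> real set \<Rightarrow> (real \<Rightarrow> 'a::metric_space) \<Rightarrow> real \<Rightarrow> bool" where
  "g_continuous_at g D u t \<longleftrightarrow>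
     (\<forall>\<epsilon>>0. \<exists>\<delta>>0. \<forall>s\<in>D. \<bar>g t - g s\<bar> < \<delta> \<longrightarrow> dist (u t) (u s) < \<epsilon>)"

definition g_continuous_on ::
    "(real \<Rightarrow> real) \<Rightarrow> real set \<Rightarrow> (real \<Rightarrow> 'a::metric_space) \<Rightarrow> bool" where
  "g_continuous_on g D u \<longleftrightarrow> (\<forall>t\<in>D. g_continuous_at g D u t)"

end

theory Submission
  imports Defs
begin

text \<open>A \<open>g\<close>-continuous \<open>f\<close> is constant on each level set of \<open>g\<close>, since there
  \<open>|g t - g s| = 0 < \<delta>\<close> for every \<open>\<delta>\<close>. Conversely, \<open>s\<^sup>*\<close> lies in \<open>[s,b]\<close> and satisfies
  \<open>g(s\<^sup>*) = g s\<close>: on \<open>[s,s\<^sup>*) \<subseteq> C\<^sub>g\<close> the function \<open>g\<close> is locally constant, hence constant,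
  and left-continuity carries this value to \<open>s\<^sup>*\<close>. So if \<open>f\<close> is constant on level sets, then
  \<open>f\<^sup>* = f\<close> on \<open>[a,b]\<close> and \<open>f\<close> inherits the \<open>g\<close>-continuity of \<open>f\<^sup>*\<close>.\<close>

lemma Cg_iff_ball: "t \<in> Cg g \<longleftrightarrow> (\<exists>e>0. \<forall>s\<in>ball t e. g s = g t)"
  unfolding Cg_def mem_Collect_eq ball_eq_greaterThanLessThan ..

lemma open_Cg: "open (Cg g)"
  unfolding open_contains_ball
proof
  fix t assume "t \<in> Cg g"
  then obtain e where "e > 0" and e: "\<forall>s\<in>ball t e. g s = g t"
    unfolding Cg_iff_ball by blast
  have "u \<in> Cg g" if u: "u \<in> ball t e" for u
    unfolding Cg_iff_ball
  proof (intro exI conjI ballI)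
    show "0 < e - dist t u" using u by simp
    fix s assume "s \<in> ball u (e - dist t u)"
    moreover have "dist t s \<le> dist t u + dist u s" by (rule dist_triangle)
    ultimately have "s \<in> ball t e" by (simp add: dist_commute)
    then show "g s = g u" using e u by metis
  qed
  then show "\<exists>e>0. ball t e \<subseteq> Cg g" using \<open>e > 0\<close> by auto
qed

lemma has_field_derivative_zero_Cg:
  assumes "x \<in> Cg g"
  shows "(g has_field_derivative 0) (at x within S)"
proof -
  obtain e where "e > 0" and e: "\<forall>s\<in>ball x e. g s = g x"
    using assms unfolding Cg_iff_ball by blast
  have "((\<lambda>_. g x) has_field_derivative 0) (at x)" by (rule DERIV_const)
  then have "(g has_field_derivative 0) (at x)"
    by (rule has_field_derivative_transform_within_open[OF _ open_ball[of x e]])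
      (use \<open>e > 0\<close> e in \<open>simp, metis\<close>)
  then show ?thesis by (rule has_field_derivative_at_within)
qed

lemma constant_on_convex_subset_Cg:
  assumes "convex S" "S \<subseteq> Cg g"
  obtains c where "\<forall>x\<in>S. g x = c"
  using has_field_derivative_zero_constant[OF assms(1)] assms(2) has_field_derivative_zero_Cg
  by (metis subsetD)

lemma star_Cg:
  assumes s: "s \<in> Cg g" and b: "b \<notin> Cg g" "s \<le> b"
  shows "s < star g s \<and> star g s \<le> b \<and> star g s \<notin> Cg g \<and> {s..<star g s} \<subseteq> Cg g"
proof -
  define K where "K = {s..b} - Cg g"
  have K: "K \<noteq> {}" "bdd_below K" "closed K"
    using b open_Cg by (auto simp: K_def intro: bdd_belowI[of _ s] closed_Diff)
  define B where "B = Inf K"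
  have "B \<in> K" unfolding B_def using closed_contains_Inf[OF K(1,2,3)] .
  then have B: "s < B" "B \<le> b" "B \<notin> Cg g"
    using s by (auto simp: K_def order.order_iff_strict)
  have "{s..<B} \<subseteq> Cg g"
  proof
    fix x assume x: "x \<in> {s..<B}"
    show "x \<in> Cg g"
    proof (rule ccontr)
      assume "x \<notin> Cg g"
      then have "x \<in> K" using x B by (auto simp: K_def)
      then have "B \<le> x" unfolding B_def using K(2) by (rule cInf_lower)
      then show False using x by simp
    qed
  qed
  with B have P: "s < B \<and> B \<notin> Cg g \<and> {s..<B} \<subseteq> Cg g" by blast
  have "star g s = B"
    unfolding star_def
  proof (simp only: s not_True_eq_False if_False, rule the_equality)
    fix c assume c: "s < c \<and> c \<notin> Cg g \<and> {s..<c} \<subseteq> Cg g"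
    then have "c \<notin> {s..<B}" "B \<notin> {s..<c}" using P by blast+
    with c P show "c = B" by auto
  qed (rule P)
  then show ?thesis using P B by simp
qed

lemma star_bounds:
  assumes "b \<notin> Cg g" "s \<le> b"
  shows "s \<le> star g s" "star g s \<le> b"
  using star_Cg[OF _ assms] assms by (cases "s \<in> Cg g"; simp add: star_def)+

lemma g_star:
  assumes left_cont: "\<forall>t. continuous (at_left t) g" and "b \<notin> Cg g" "s \<le> b"
  shows "g (star g s) = g s"
proof (cases "s \<in> Cg g")
  case False
  then show ?thesis by (simp add: star_def)
next
  case True
  let ?B = "star g s"
  have B: "s < ?B" "{s..<?B} \<subseteq> Cg g" using star_Cg[OF True assms(2,3)] by auto
  then obtain c where c: "\<forall>x\<in>{s..<?B}. g x = c"
    using constant_on_convex_subset_Cg[of "{s..<?B}"] by auto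
  have "eventually (\<lambda>x. g x = c) (at_left ?B)"
    unfolding eventually_at_left_field using B c by (intro exI[of _ s]) auto
  then have "(g \<longlongrightarrow> c) (at_left ?B)" by (rule tendsto_eventually)
  moreover have "(g \<longlongrightarrow> g ?B) (at_left ?B)" using left_cont by (simp add: continuous_within)
  ultimately have "g ?B = c" by (rule tendsto_unique[OF trivial_limit_at_left_real, rotated])
  with c B show ?thesis by simp
qed

lemma g_continuous_on_imp_eq_on_level_sets:
  assumes "g_continuous_on g D f" "t \<in> D" "s \<in> D" "g t = g s"
  shows "f t = f s"
proof -
  have "dist (f t) (f s) < \<epsilon>" if "\<epsilon> > 0" for \<epsilon>
  proof -
    obtain \<delta> where "\<delta> > 0" "\<forall>s\<in>D. \<bar>g t - g s\<bar> < \<delta> \<longrightarrow> dist (f t) (f s) < \<epsilon>"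
      using assms(1,2) \<open>\<epsilon> > 0\<close> unfolding g_continuous_on_def g_continuous_at_def by blast
    then show ?thesis using assms(3,4) by simp
  qed
  then show ?thesis using zero_less_dist_iff by blast
qed

lemma g_continuous_on_cong:
  assumes "\<And>s. s \<in> D \<Longrightarrow> f s = h s"
  shows "g_continuous_on g D f \<longleftrightarrow> g_continuous_on g D h"
  using assms unfolding g_continuous_on_def g_continuous_at_def by simp

lemma g_continuous_on_iff_eq_on_level_sets:
  fixes f :: "real \<Rightarrow> 'a::metric_space"
  assumes left_cont: "\<forall>t. continuous (at_left t) g" and b: "b \<notin> Cg g"
    and f_star: "g_continuous_on g {a..b} (\<lambda>s. f (star g s))"
  shows "g_continuous_on g {a..b} f \<longleftrightarrow>
           (\<forall>t\<in>{a..b}. \<forall>s\<in>{a..b}. g t = g s \<longrightarrow> f t = f s)"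
proof
  assume "g_continuous_on g {a..b} f"
  then show "\<forall>t\<in>{a..b}. \<forall>s\<in>{a..b}. g t = g s \<longrightarrow> f t = f s"
    by (intro ballI impI) (rule g_continuous_on_imp_eq_on_level_sets)
next
  assume level: "\<forall>t\<in>{a..b}. \<forall>s\<in>{a..b}. g t = g s \<longrightarrow> f t = f s"
  have "f (star g s) = f s" if "s \<in> {a..b}" for s
  proof -
    have "star g s \<in> {a..b}" using star_bounds[OF b, of s] that by simp
    moreover have "g (star g s) = g s" using g_star[OF left_cont b, of s] that by simp
    ultimately show ?thesis using level that by blast
  qed
  then show "g_continuous_on g {a..b} f"
    using f_star g_continuous_on_cong[of "{a..b}" f "\<lambda>s. f (star g s)" g] by simp
qed

theorem proposition5p3:
  fixes g :: "real \<Rightarrow> real" and a b :: real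
  assumes "mono g"
    and "\<forall>t. continuous (at_left t) g"
    and "a < b"
    and "a \<notin> Ng_minus g \<union> Dg g"
    and "b \<notin> Dg g \<union> Cg g \<union> Ng_plus g"
  shows "(\<forall>f :: real \<Rightarrow> real.
            g_continuous_on g {a..b} (\<lambda>s. f (star g s)) \<longrightarrow>
            (g_continuous_on g {a..b} f \<longleftrightarrow>
               (\<forall>t\<in>{a..b}. \<forall>s\<in>{a..b}. g t = g s \<longrightarrow> f t = f s)))
       \<and> (\<forall>f :: real \<Rightarrow> complex.
            g_continuous_on g {a..b} (\<lambda>s. f (star g s)) \<longrightarrow>
            (g_continuous_on g {a..b} f \<longleftrightarrow>
               (\<forall>t\<in>{a..b}. \<forall>s\<in>{a..b}. g t = g s \<longrightarrow> f t = f s)))"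
proof -
  have "b \<notin> Cg g" using assms(5) by simp
  then show ?thesis
    by (intro conjI allI impI g_continuous_on_iff_eq_on_level_sets[OF assms(2)])
qed
end
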